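(* For every integer $k$ with $1\le k\le p$, the mechanism $RC_k$ subgame perfect implements the supermajority rule $Maj_k$: for every preference profile $R$, every subgame-perfect equilibrium yields the outcome $Maj_k(R)$, and some subgame-perfect equilibrium yields $Maj_k(R)$.
   Context: Agents $I=\{1,\dots,n\}$, $n=2p+1$, with complete information; options $A=\{sq,x\}$ (status quo and alternative); strict preferences over $A$; lotteries compared by stochastic dominance (an agent preferring $y$ weakly (strictly) prefers $\beta$ to $\eta$ iff $\beta(y)\ge\eta(y)$ ($>$)). Supermajority rule: $Maj_k(R)=x$ if $|\{i: x\,R_i\,sq\}|\ge p+k$, and $Maj_k(R)=sq$ otherwise. Mechanism $RC_k$: Voting stage: each agent simultaneously votes $v_i\in A$; the profile $v$ and the winner are announced, the winner being $x$ if at least $p+k$ agents vote $x$ and $sq$ otherwise. Confirmation stage: let $\bar t=p+k$ if $sq$ is the Voting-stage winner and $\bar t=p+2-k$ otherwise; $\bar t$ agents are drawn uniformly at random and ordered uniformly, $\pi_1,\dots,\pi_{\bar t}$; sequentially, as long as nobody has announced $Y$, agent $\pi_t$ announces $Y$ or $N$. If some agent announces $Y$ the outcome is the Voting-stage winner; if all announce $N$, the outcome is the lottery assigning to each option its share of Voting-stage votes ($|\{i:v_i=y\}|/n$ for $y\in A$). *)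

theory Defs
  imports Complex_Main
begin

datatype opt = SQ | X

text \<open>Agents are 0,...,n-1 with n = 2p+1.  A preference profile R assigns to every
agent its (strictly) preferred option.  A lottery over {SQ, X} is represented by the
probability it assigns to X (a real number in [0,1]).\<close>

definition nag :: "nat \<Rightarrow> nat" where
  "nag p = 2 * p + 1"

definition cntX :: "opt list \<Rightarrow> nat" where
  "cntX v = length (filter (\<lambda>a. a = X) v)"

definition Maj :: "nat \<Rightarrow> nat \<Rightarrow> (nat \<Rightarrow> opt) \<Rightarrow> opt" where
  "Maj p k R = (if card {i. i < nag p \<and> R i = X} \<ge> p + k then X else SQ)"

definition winner :: "nat \<Rightarrow> nat \<Rightarrow> opt list \<Rightarrow> opt" where
  "winner p k v = (if cntX v \<ge> p + k then X else SQ)"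

definition tbar :: "nat \<Rightarrow> nat \<Rightarrow> opt list \<Rightarrow> nat" where
  "tbar p k v = (if winner p k v = SQ then p + k else p + 2 - k)"

text \<open>Possible outcomes of the chance move: ordered draws of t distinct agents.\<close>
definition draws :: "nat \<Rightarrow> nat \<Rightarrow> nat list set" where
  "draws p t = {\<pi>. distinct \<pi> \<and> set \<pi> \<subseteq> {..<nag p} \<and> length \<pi> = t}"

definition lotX :: "opt \<Rightarrow> real" where
  "lotX y = (if y = X then 1 else 0)"

text \<open>Confirmation strategies: conf i v \<pi> t = True means agent i announces Y
at the node where the vote profile is v, the ordered draw is \<pi>, it is the turn of
position t and all earlier drawn agents announced N.\<close>
definition nodeX :: "nat \<Rightarrow> nat \<Rightarrow> (nat \<Rightarrow> opt list \<Rightarrow> nat list \<Rightarrow> nat \<Rightarrow> bool)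
    \<Rightarrow> opt list \<Rightarrow> nat list \<Rightarrow> nat \<Rightarrow> real" where
  "nodeX p k conf v \<pi> t =
     (if \<exists>j. t \<le> j \<and> j < length \<pi> \<and> conf (\<pi> ! j) v \<pi> j
      then lotX (winner p k v)
      else real (cntX v) / real (nag p))"

definition chanceX :: "nat \<Rightarrow> nat \<Rightarrow> (nat \<Rightarrow> opt list \<Rightarrow> nat list \<Rightarrow> nat \<Rightarrow> bool)
    \<Rightarrow> opt list \<Rightarrow> real" where
  "chanceX p k conf v =
     (\<Sum>\<pi>\<in>draws p (tbar p k v). nodeX p k conf v \<pi> 0) / real (card (draws p (tbar p k v)))"

definition votes :: "nat \<Rightarrow> (nat \<Rightarrow> opt) \<Rightarrow> opt list" where
  "votes p vote = map vote [0..<nag p]"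

definition rootX :: "nat \<Rightarrow> nat \<Rightarrow> (nat \<Rightarrow> opt)
    \<Rightarrow> (nat \<Rightarrow> opt list \<Rightarrow> nat list \<Rightarrow> nat \<Rightarrow> bool) \<Rightarrow> real" where
  "rootX p k vote conf = chanceX p k conf (votes p vote)"

definition probOf :: "opt \<Rightarrow> real \<Rightarrow> real" where
  "probOf y q = (if y = X then q else 1 - q)"

text \<open>Stochastic dominance: an agent preferring y strictly prefers q1 to q2.\<close>
definition spref :: "opt \<Rightarrow> real \<Rightarrow> real \<Rightarrow> bool" where
  "spref y q1 q2 \<longleftrightarrow> probOf y q1 > probOf y q2"

text \<open>Subgame perfect equilibrium of RC_k at profile R: a Nash equilibrium (no
strictly SD-preferred unilateral deviation) in every subgame: the whole game, the
subgame starting at the chance node after every vote profile, and the subgame starting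
at every decision node of the confirmation stage.\<close>
definition SPE :: "nat \<Rightarrow> nat \<Rightarrow> (nat \<Rightarrow> opt) \<Rightarrow> (nat \<Rightarrow> opt)
    \<Rightarrow> (nat \<Rightarrow> opt list \<Rightarrow> nat list \<Rightarrow> nat \<Rightarrow> bool) \<Rightarrow> bool" where
  "SPE p k R vote conf \<longleftrightarrow>
     (\<forall>i < nag p. \<forall>a c.
        \<not> spref (R i) (rootX p k (vote(i := a)) (conf(i := c))) (rootX p k vote conf)) \<and>
     (\<forall>v. length v = nag p \<longrightarrow> (\<forall>i < nag p. \<forall>c.
        \<not> spref (R i) (chanceX p k (conf(i := c)) v) (chanceX p k conf v))) \<and>
     (\<forall>v \<pi> t. length v = nag p \<and> \<pi> \<in> draws p (tbar p k v) \<and> t < length \<pi> \<longrightarrow>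
        (\<forall>i < nag p. \<forall>c.
          \<not> spref (R i) (nodeX p k (conf(i := c)) v \<pi> t) (nodeX p k conf v \<pi> t)))"

end

theory Submission
  imports Defs
begin

text \<open>Backward induction in the Confirmation stage: in every subgame-perfect equilibrium a
  drawn agent confirms exactly when he prefers the Voting-stage winner \<open>w\<close> (up to
  indifference). Hence the outcome is \<open>w\<close> unless the draw of \<open>tbar\<close> agents contains no
  supporter of \<open>w\<close>, which happens with probability \<open>Q w\<close> (\<open>prob_unconfirmed\<close>), and then
  it is the vote-share lottery. The draw sizes are chosen so that \<open>Q w = 0\<close> iff
  \<open>w = Maj_k(R)\<close>: the opponents of \<open>Maj_k(R)\<close> are too few to fill the draw, those of the
  other option are not. So sincere voting and confirming is an equilibrium with outcome
  \<open>Maj_k(R)\<close>. Conversely, if \<open>w\<close> differed from \<open>Maj_k(R)\<close>, an agent preferring \<open>Maj_k(R)\<close>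
  who voted for \<open>w\<close> would gain by switching his vote: either the winner changes, or the
  vote share of \<open>Maj_k(R)\<close>, which decides the outcome with probability \<open>Q w > 0\<close>, rises.\<close>

lemma opt_neq_iff [simp]: "y \<noteq> SQ \<longleftrightarrow> y = X" "y \<noteq> X \<longleftrightarrow> y = SQ"
  by (cases y; simp)+

lemma not_spref_iff: "\<not> spref y q1 q2 \<longleftrightarrow> probOf y q1 \<le> probOf y q2"
  by (simp add: spref_def not_less)

lemma not_spref_trans: "\<not> spref y q1 q2 \<Longrightarrow> \<not> spref y q2 q3 \<Longrightarrow> \<not> spref y q1 q3"
  by (simp add: not_spref_iff)

lemma probOf_lotX: "probOf y (lotX w) = (if w = y then 1 else 0)"
  by (cases y; cases w) (simp_all add: probOf_def lotX_def)

lemma probOf_eq_1_iff: "probOf y q = 1 \<longleftrightarrow> q = lotX y"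
  by (cases y) (auto simp: probOf_def lotX_def)

lemma probOf_eq_0_iff: "y \<noteq> w \<Longrightarrow> probOf y q = 0 \<longleftrightarrow> q = lotX w"
  by (cases y) (auto simp: probOf_def lotX_def)

lemma probOf_bounds: "0 \<le> q \<Longrightarrow> q \<le> 1 \<Longrightarrow> 0 \<le> probOf y q \<and> probOf y q \<le> 1"
  by (simp add: probOf_def)

lemma probOf_convex: "probOf y ((1 - s) * a + s * b) = (1 - s) * probOf y a + s * probOf y b"
  by (simp add: probOf_def algebra_simps)

lemma not_spref_average:
  assumes "\<And>x. x \<in> A \<Longrightarrow> \<not> spref y (f x) (g x)"
  shows "\<not> spref y (sum f A / real (card A)) (sum g A / real (card A))"
proof (cases y)
  case SQ
  with assms have "sum g A \<le> sum f A"
    by (intro sum_mono) (force simp: not_spref_iff probOf_def)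
  with SQ show ?thesis by (simp add: not_spref_iff probOf_def divide_right_mono)
next
  case X
  with assms have "sum f A \<le> sum g A"
    by (intro sum_mono) (force simp: not_spref_iff probOf_def)
  with X show ?thesis by (simp add: not_spref_iff probOf_def divide_right_mono)
qed

lemma average_bounds:
  assumes "\<And>x. x \<in> A \<Longrightarrow> 0 \<le> f x \<and> f x \<le> (1::real)"
  shows "0 \<le> sum f A / real (card A) \<and> sum f A / real (card A) \<le> 1"
proof -
  have "sum f A \<le> real (card A)"
    using sum_bounded_above[of A f 1] assms by simp
  moreover have "0 \<le> sum f A"
    using assms by (simp add: sum_nonneg)
  ultimately show ?thesis
    by (cases "card A = 0") (simp_all add: divide_le_eq_1)
qed

lemma length_votes [simp]: "length (votes p f) = nag p"
  by (simp add: votes_def)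

lemma cntX_votes: "cntX (votes p f) = card {i. i < nag p \<and> f i = X}"
  unfolding cntX_def votes_def length_filter_conv_card
  by (rule arg_cong[where f = card]) auto

lemma vote_share_bounds:
  assumes "length v = nag p"
  shows "0 \<le> real (cntX v) / real (nag p) \<and> real (cntX v) / real (nag p) \<le> 1"
proof -
  have "cntX v \<le> nag p"
    using assms length_filter_le unfolding cntX_def by metis
  then show ?thesis by (auto simp: divide_le_eq_1)
qed

lemma probOf_vote_share:
  "probOf y (real (cntX (votes p f)) / real (nag p))
     = real (card {i. i < nag p \<and> f i = y}) / real (nag p)"
proof (cases y)
  case SQ
  have "{i. i < nag p \<and> f i = SQ} = {..<nag p} - {i. i < nag p \<and> f i = X}"
    by auto
  then have "card {i. i < nag p \<and> f i = SQ} = nag p - card {i. i < nag p \<and> f i = X}"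
    by (simp only:) (subst card_Diff_subset, auto)
  moreover have "card {i. i < nag p \<and> f i = X} \<le> nag p"
    using card_mono[of "{..<nag p}" "{i. i < nag p \<and> f i = X}"] by auto
  moreover have "nag p > 0" by (simp add: nag_def)
  ultimately show ?thesis
    using SQ by (simp add: probOf_def cntX_votes of_nat_diff field_simps)
qed (simp add: probOf_def cntX_votes)

lemma card_eq_less_if_ne:
  fixes n :: nat
  assumes "i < n" and "f i \<noteq> y"
  shows "card {j. j < n \<and> f j = y} < n"
proof -
  have "{j. j < n \<and> f j = y} \<subset> {..<n}"
    using assms by auto
  then show ?thesis
    using psubset_card_mono[of "{..<n}"] by simp
qed

lemma card_eq_fun_upd:
  fixes n :: nat
  assumes "i < n" and "f i \<noteq> y"
  shows "card {j. j < n \<and> (f(i := y)) j = y} = card {j. j < n \<and> f j = y} + 1"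
proof -
  have "{j. j < n \<and> (f(i := y)) j = y} = insert i {j. j < n \<and> f j = y}"
    using assms by auto
  then show ?thesis
    using assms(2) by simp
qed

lemma winner_votes_eq_Maj: "winner p k (votes p R) = Maj p k R"
  by (simp add: winner_def Maj_def cntX_votes)

lemma winner_votes_mono:
  assumes "winner p k (votes p R) = y" and "\<And>i. i < nag p \<Longrightarrow> R i = y \<Longrightarrow> f i = y"
  shows "winner p k (votes p f) = y"
proof (cases y)
  case SQ
  then have "card {i. i < nag p \<and> f i = X} \<le> card {i. i < nag p \<and> R i = X}"
    using assms(2) by (intro card_mono) force+
  with SQ assms(1) show ?thesis by (simp add: winner_def cntX_votes split: if_splits)
next
  case X
  then have "card {i. i < nag p \<and> R i = X} \<le> card {i. i < nag p \<and> f i = X}"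
    using assms(2) by (intro card_mono) auto
  with X assms(1) show ?thesis by (simp add: winner_def cntX_votes split: if_splits)
qed

text \<open>\<open>E\<close> and \<open>E'\<close> say whether some later drawn agent confirms the winner \<open>w\<close> before and after a
  deviation; a supporter of \<open>w\<close> can only remove confirmations, an opponent only add them.\<close>
lemma not_spref_confirmation_change:
  assumes "0 \<le> b" "b \<le> 1" and "y = w \<Longrightarrow> E' \<longrightarrow> E" and "y \<noteq> w \<Longrightarrow> E \<longrightarrow> E'"
  shows "\<not> spref y (if E' then lotX w else b) (if E then lotX w else b)"
  using assms
  by (cases y; cases w; cases E; cases E') (simp_all add: not_spref_iff probOf_def lotX_def)

definition draw_size :: "nat \<Rightarrow> nat \<Rightarrow> opt \<Rightarrow> nat" where
  "draw_size p k w = (if w = SQ then p + k else p + 2 - k)"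

definition prob_unconfirmed :: "nat \<Rightarrow> nat \<Rightarrow> (nat \<Rightarrow> opt) \<Rightarrow> opt \<Rightarrow> real" where
  "prob_unconfirmed p k R w =
     real (card {\<pi> \<in> draws p (draw_size p k w). \<forall>x\<in>set \<pi>. R x \<noteq> w})
       / real (card (draws p (draw_size p k w)))"

lemma tbar_eq_draw_size: "tbar p k v = draw_size p k (winner p k v)"
  by (simp add: tbar_def draw_size_def)

lemma draw_size_le_nag: "1 \<le> k \<Longrightarrow> k \<le> p \<Longrightarrow> draw_size p k w \<le> nag p"
  by (auto simp: draw_size_def nag_def)

lemma finite_draws: "finite (draws p t)"
proof -
  have "draws p t \<subseteq> {xs. set xs \<subseteq> {..<nag p} \<and> length xs = t}"
    by (auto simp: draws_def)
  then show ?thesis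
    using finite_lists_length_eq[of "{..<nag p}" t] finite_subset by blast
qed

lemma ex_draw_subset_iff:
  assumes "A \<subseteq> {..<nag p}"
  shows "(\<exists>\<pi>\<in>draws p t. set \<pi> \<subseteq> A) \<longleftrightarrow> t \<le> card A"
proof
  assume "\<exists>\<pi>\<in>draws p t. set \<pi> \<subseteq> A"
  then obtain \<pi> where \<pi>: "\<pi> \<in> draws p t" "set \<pi> \<subseteq> A" ..
  then have "t = card (set \<pi>)"
    by (simp add: draws_def distinct_card)
  also have "\<dots> \<le> card A"
    using \<pi>(2) assms finite_subset[OF assms] by (intro card_mono) simp_all
  finally show "t \<le> card A" .
next
  assume "t \<le> card A"
  have "finite A"
    using assms finite_subset by blast
  then obtain xs where xs: "set xs = A" "distinct xs"
    using finite_distinct_list by blast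
  then have "length xs = card A"
    by (metis distinct_card)
  then have "take t xs \<in> draws p t"
    using xs assms \<open>t \<le> card A\<close> set_take_subset[of t xs] by (simp add: draws_def)
  with xs show "\<exists>\<pi>\<in>draws p t. set \<pi> \<subseteq> A"
    using set_take_subset[of t xs] by blast
qed

lemma card_draws_pos: "t \<le> nag p \<Longrightarrow> 0 < card (draws p t)"
  using ex_draw_subset_iff[of "{..<nag p}" p t] finite_draws by (auto simp: card_gt_0_iff)

lemma prob_unconfirmed_bounds: "0 \<le> prob_unconfirmed p k R w \<and> prob_unconfirmed p k R w \<le> 1"
proof -
  have "card {\<pi> \<in> draws p (draw_size p k w). \<forall>x\<in>set \<pi>. R x \<noteq> w}
          \<le> card (draws p (draw_size p k w))"
    using finite_draws by (intro card_mono) auto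
  then show ?thesis by (auto simp: prob_unconfirmed_def divide_le_eq_1)
qed

lemma prob_unconfirmed_eq_0_iff_card:
  assumes "draw_size p k w \<le> nag p"
  shows "prob_unconfirmed p k R w = 0 \<longleftrightarrow> card {i. i < nag p \<and> R i \<noteq> w} < draw_size p k w"
proof -
  let ?D = "draws p (draw_size p k w)"
  have "{\<pi> \<in> ?D. \<forall>x\<in>set \<pi>. R x \<noteq> w} \<noteq> {}
          \<longleftrightarrow> (\<exists>\<pi>\<in>?D. set \<pi> \<subseteq> {i. i < nag p \<and> R i \<noteq> w})"
    by (auto simp: draws_def)
  also have "\<dots> \<longleftrightarrow> draw_size p k w \<le> card {i. i < nag p \<and> R i \<noteq> w}"
    by (rule ex_draw_subset_iff) auto
  finally show ?thesis
    using card_draws_pos[OF assms] finite_draws[of p "draw_size p k w"]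
    by (auto simp: prob_unconfirmed_def)
qed

lemma prob_unconfirmed_eq_0_iff:
  assumes "1 \<le> k" "k \<le> p"
  shows "prob_unconfirmed p k R w = 0 \<longleftrightarrow> w = Maj p k R"
proof -
  let ?NX = "card {i. i < nag p \<and> R i = X}"
  have "{i. i < nag p \<and> R i \<noteq> X} = {..<nag p} - {i. i < nag p \<and> R i = X}"
    by auto
  then have "card {i. i < nag p \<and> R i \<noteq> X} = nag p - ?NX"
    by (simp only:) (subst card_Diff_subset, auto)
  then have "card {i. i < nag p \<and> R i \<noteq> w} < draw_size p k w \<longleftrightarrow> w = Maj p k R"
  proof (cases w)
    case X
    have "nag p - ?NX < p + 2 - k \<longleftrightarrow> p + k \<le> ?NX"
      using assms unfolding nag_def by arith
    with X \<open>card {i. i < nag p \<and> R i \<noteq> X} = nag p - ?NX\<close> show ?thesis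
      by (simp only: draw_size_def Maj_def) simp
  qed (simp add: draw_size_def Maj_def)
  with prob_unconfirmed_eq_0_iff_card[OF draw_size_le_nag[OF assms]] show ?thesis
    by blast
qed

definition sincere_conf :: "nat \<Rightarrow> nat \<Rightarrow> (nat \<Rightarrow> opt)
    \<Rightarrow> nat \<Rightarrow> opt list \<Rightarrow> nat list \<Rightarrow> nat \<Rightarrow> bool" where
  "sincere_conf p k R i v \<pi> t \<longleftrightarrow> R i = winner p k v"

definition confirmation_equilibrium :: "nat \<Rightarrow> nat \<Rightarrow> (nat \<Rightarrow> opt)
    \<Rightarrow> (nat \<Rightarrow> opt list \<Rightarrow> nat list \<Rightarrow> nat \<Rightarrow> bool) \<Rightarrow> bool" where
  "confirmation_equilibrium p k R conf \<longleftrightarrow>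
     (\<forall>v \<pi> t. length v = nag p \<and> \<pi> \<in> draws p (tbar p k v) \<and> t < length \<pi> \<longrightarrow>
        (\<forall>i < nag p. \<forall>c.
          \<not> spref (R i) (nodeX p k (conf(i := c)) v \<pi> t) (nodeX p k conf v \<pi> t)))"

lemma SPE_confirmation_equilibrium: "SPE p k R vote conf \<Longrightarrow> confirmation_equilibrium p k R conf"
  unfolding SPE_def confirmation_equilibrium_def by blast

lemma nodeX_bounds:
  "length v = nag p \<Longrightarrow> 0 \<le> nodeX p k conf v \<pi> t \<and> nodeX p k conf v \<pi> t \<le> 1"
  using vote_share_bounds by (simp add: nodeX_def lotX_def)

lemma nodeX_step:
  assumes "t < length \<pi>"
  shows "nodeX p k conf v \<pi> t
           = (if conf (\<pi> ! t) v \<pi> t then lotX (winner p k v) else nodeX p k conf v \<pi> (Suc t))"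
proof -
  have "(\<exists>j. t \<le> j \<and> j < length \<pi> \<and> conf (\<pi> ! j) v \<pi> j)
          \<longleftrightarrow> conf (\<pi> ! t) v \<pi> t \<or> (\<exists>j. Suc t \<le> j \<and> j < length \<pi> \<and> conf (\<pi> ! j) v \<pi> j)"
    using assms by (metis Suc_le_eq le_eq_less_or_eq)
  then show ?thesis by (simp add: nodeX_def)
qed

lemma nodeX_fun_upd_current:
  assumes "distinct \<pi>" and "t < length \<pi>"
  shows "nodeX p k (conf(\<pi> ! t := c)) v \<pi> t
           = (if c v \<pi> t then lotX (winner p k v) else nodeX p k conf v \<pi> (Suc t))"
proof -
  have "nodeX p k (conf(\<pi> ! t := c)) v \<pi> (Suc t) = nodeX p k conf v \<pi> (Suc t)"
    using assms by (auto simp: nodeX_def nth_eq_iff_index_eq)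
  with assms(2) show ?thesis by (simp add: nodeX_step)
qed

lemma nodeX_sincere_conf:
  "nodeX p k (sincere_conf p k R) v \<pi> t
     = (if \<exists>j. t \<le> j \<and> j < length \<pi> \<and> R (\<pi> ! j) = winner p k v
        then lotX (winner p k v) else real (cntX v) / real (nag p))"
  by (simp add: nodeX_def sincere_conf_def)

lemma nodeX_confirmation_equilibrium_step:
  assumes eq: "confirmation_equilibrium p k R conf" and v: "length v = nag p"
    and \<pi>: "\<pi> \<in> draws p (tbar p k v)" and t: "t < length \<pi>"
  shows "nodeX p k conf v \<pi> t = (if R (\<pi> ! t) = winner p k v
           then lotX (winner p k v) else nodeX p k conf v \<pi> (Suc t))"
proof -
  let ?i = "\<pi> ! t" and ?w = "winner p k v"
  let ?Y = "nodeX p k conf v \<pi> t" and ?N = "nodeX p k conf v \<pi> (Suc t)"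
  have dist: "distinct \<pi>" and "set \<pi> \<subseteq> {..<nag p}"
    using \<pi> by (simp_all add: draws_def)
  then have i: "?i < nag p"
    using nth_mem[OF t] by auto
  have Y: "?Y = lotX ?w \<or> ?Y = ?N"
    using nodeX_step[OF t] by simp
  have "\<not> spref (R ?i) (nodeX p k (conf(?i := c)) v \<pi> t) ?Y" for c
    using eq v \<pi> t i unfolding confirmation_equilibrium_def by blast
  from this[of "\<lambda>_ _ _. True"] this[of "\<lambda>_ _ _. False"]
  have confirm: "probOf (R ?i) (lotX ?w) \<le> probOf (R ?i) ?Y"
    and reject: "probOf (R ?i) ?N \<le> probOf (R ?i) ?Y"
    by (simp_all add: nodeX_fun_upd_current[OF dist t] not_spref_iff)
  have "0 \<le> ?Y" "?Y \<le> 1" "0 \<le> ?N" "?N \<le> 1"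
    using nodeX_bounds[OF v] by auto
  then have bounds: "probOf (R ?i) ?Y \<le> 1" "0 \<le> probOf (R ?i) ?N"
    by (simp_all add: probOf_def)
  show ?thesis
  proof (cases "R ?i = ?w")
    case True
    with confirm bounds(1) have "probOf ?w ?Y = 1"
      by (simp add: probOf_lotX)
    with True show ?thesis
      by (simp add: probOf_eq_1_iff)
  next
    case False
    have "?Y = ?N"
    proof (rule ccontr)
      assume "?Y \<noteq> ?N"
      with Y have "?Y = lotX ?w" by simp
      with False reject bounds(2) have "probOf (R ?i) ?N = 0"
        by (simp add: probOf_lotX)
      with False \<open>?Y = lotX ?w\<close> \<open>?Y \<noteq> ?N\<close> show False
        by (simp add: probOf_eq_0_iff)
    qed
    with False show ?thesis by simp
  qed
qed

lemma nodeX_eq_sincere_conf: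
  assumes eq: "confirmation_equilibrium p k R conf" and v: "length v = nag p"
    and \<pi>: "\<pi> \<in> draws p (tbar p k v)" and "t \<le> length \<pi>"
  shows "nodeX p k conf v \<pi> t = nodeX p k (sincere_conf p k R) v \<pi> t"
  using \<open>t \<le> length \<pi>\<close>
proof (induction t rule: inc_induct)
  case base
  then show ?case by (auto simp: nodeX_def sincere_conf_def)
next
  case (step t)
  have "nodeX p k (sincere_conf p k R) v \<pi> t = (if R (\<pi> ! t) = winner p k v
          then lotX (winner p k v) else nodeX p k (sincere_conf p k R) v \<pi> (Suc t))"
    using nodeX_step[OF step.hyps(2)] by (simp add: sincere_conf_def)
  with step.IH show ?case
    using nodeX_confirmation_equilibrium_step[OF eq v \<pi> step.hyps(2)] by simp
qed

lemma sincere_conf_node_equilibrium: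
  assumes "length v = nag p"
  shows "\<not> spref (R i) (nodeX p k ((sincere_conf p k R)(i := c)) v \<pi> t)
                        (nodeX p k (sincere_conf p k R) v \<pi> t)"
proof -
  let ?w = "winner p k v"
  define b where "b = real (cntX v) / real (nag p)"
  let ?E = "\<exists>j. t \<le> j \<and> j < length \<pi> \<and> R (\<pi> ! j) = ?w"
  let ?E' = "\<exists>j. t \<le> j \<and> j < length \<pi> \<and> ((sincere_conf p k R)(i := c)) (\<pi> ! j) v \<pi> j"
  have deviation: "nodeX p k ((sincere_conf p k R)(i := c)) v \<pi> t = (if ?E' then lotX ?w else b)"
    unfolding nodeX_def b_def ..
  have sincere: "nodeX p k (sincere_conf p k R) v \<pi> t = (if ?E then lotX ?w else b)"
    unfolding nodeX_sincere_conf b_def ..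
  have b: "0 \<le> b" "b \<le> 1"
    using vote_share_bounds[OF assms] by (simp_all add: b_def)
  have "?E' \<longrightarrow> ?E" if "R i = ?w"
    using that by (auto simp: sincere_conf_def split: if_splits)
  moreover have "?E \<longrightarrow> ?E'" if "R i \<noteq> ?w"
    using that by (auto simp: sincere_conf_def)
  ultimately show ?thesis
    unfolding deviation sincere using b by (intro not_spref_confirmation_change)
qed

lemma confirmation_equilibrium_sincere_conf: "confirmation_equilibrium p k R (sincere_conf p k R)"
  unfolding confirmation_equilibrium_def by (simp add: sincere_conf_node_equilibrium)

lemma nodeX_sincere_conf_0:
  "nodeX p k (sincere_conf p k R) v \<pi> 0
     = (if \<forall>x\<in>set \<pi>. R x \<noteq> winner p k v
        then real (cntX v) / real (nag p) else lotX (winner p k v))"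
  unfolding nodeX_sincere_conf by (auto simp: in_set_conv_nth) (metis nth_mem)

lemma chanceX_sincere_conf:
  assumes "1 \<le> k" "k \<le> p"
  shows "chanceX p k (sincere_conf p k R) v
           = (1 - prob_unconfirmed p k R (winner p k v)) * lotX (winner p k v)
             + prob_unconfirmed p k R (winner p k v) * (real (cntX v) / real (nag p))"
proof -
  let ?w = "winner p k v" and ?b = "real (cntX v) / real (nag p)"
  let ?D = "draws p (draw_size p k ?w)"
  let ?B = "{\<pi> \<in> ?D. \<forall>x\<in>set \<pi>. R x \<noteq> ?w}"
  have "(\<Sum>\<pi>\<in>?D. nodeX p k (sincere_conf p k R) v \<pi> 0)
          = (\<Sum>\<pi>\<in>?D. lotX ?w + (if \<forall>x\<in>set \<pi>. R x \<noteq> ?w then ?b - lotX ?w else 0))"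
    by (intro sum.cong) (simp_all add: nodeX_sincere_conf_0)
  also have "\<dots> = real (card ?D) * lotX ?w + real (card ?B) * (?b - lotX ?w)"
    by (simp add: sum.distrib sum.inter_filter[OF finite_draws, symmetric])
  finally show ?thesis
    using card_draws_pos[OF draw_size_le_nag[OF assms]]
    by (simp add: chanceX_def tbar_eq_draw_size prob_unconfirmed_def field_simps)
qed

lemma chanceX_eq_sincere_conf:
  assumes "confirmation_equilibrium p k R conf" and "length v = nag p"
  shows "chanceX p k conf v = chanceX p k (sincere_conf p k R) v"
  unfolding chanceX_def using nodeX_eq_sincere_conf[OF assms] by simp

lemma chanceX_bounds:
  assumes "length v = nag p"
  shows "0 \<le> chanceX p k conf v \<and> chanceX p k conf v \<le> 1"
  unfolding chanceX_def using nodeX_bounds[OF assms] by (rule average_bounds)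

lemma chanceX_eq_lotX_Maj:
  assumes "1 \<le> k" "k \<le> p" and "confirmation_equilibrium p k R conf"
    and "length v = nag p" and "winner p k v = Maj p k R"
  shows "chanceX p k conf v = lotX (Maj p k R)"
proof -
  have "prob_unconfirmed p k R (Maj p k R) = 0"
    using prob_unconfirmed_eq_0_iff[OF assms(1,2)] by simp
  with assms show ?thesis
    by (simp add: chanceX_eq_sincere_conf chanceX_sincere_conf)
qed

lemma probOf_Maj_chanceX:
  assumes "1 \<le> k" "k \<le> p" and "confirmation_equilibrium p k R conf"
    and "winner p k (votes p f) \<noteq> Maj p k R"
  shows "probOf (Maj p k R) (chanceX p k conf (votes p f))
           = prob_unconfirmed p k R (winner p k (votes p f))
             * (real (card {i. i < nag p \<and> f i = Maj p k R}) / real (nag p))"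
proof -
  have "chanceX p k conf (votes p f)
          = (1 - prob_unconfirmed p k R (winner p k (votes p f))) * lotX (winner p k (votes p f))
            + prob_unconfirmed p k R (winner p k (votes p f))
              * (real (cntX (votes p f)) / real (nag p))"
    using chanceX_eq_sincere_conf[OF assms(3) length_votes] chanceX_sincere_conf[OF assms(1,2)]
    by simp
  with assms(4) show ?thesis
    by (simp only: probOf_convex probOf_vote_share) (simp add: probOf_lotX)
qed

lemma sincere_conf_chance_equilibrium:
  assumes "length v = nag p"
  shows "\<not> spref (R i) (chanceX p k ((sincere_conf p k R)(i := c)) v)
                        (chanceX p k (sincere_conf p k R) v)"
  unfolding chanceX_def
  by (rule not_spref_average) (rule sincere_conf_node_equilibrium[OF assms])

lemma SPE_winner_eq_Maj:
  assumes k: "1 \<le> k" "k \<le> p" and spe: "SPE p k R vote conf"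
  shows "winner p k (votes p vote) = Maj p k R"
proof (rule ccontr)
  let ?y = "Maj p k R" and ?w = "winner p k (votes p vote)"
  let ?Q = "prob_unconfirmed p k R ?w"
  let ?share = "\<lambda>f. real (card {j. j < nag p \<and> f j = ?y}) / real (nag p)"
  assume w: "?w \<noteq> ?y"
  then obtain i where i: "i < nag p" "R i = ?y" "vote i \<noteq> ?y"
    using winner_votes_mono[OF winner_votes_eq_Maj, where f = vote] by blast
  let ?vote' = "vote(i := ?y)"
  have eq: "confirmation_equilibrium p k R conf"
    using spe by (rule SPE_confirmation_equilibrium)
  have Q: "0 < ?Q" "?Q \<le> 1"
    using prob_unconfirmed_eq_0_iff[OF k, of R ?w] prob_unconfirmed_bounds[of p k R ?w] w
    by auto
  have "\<not> spref (R i) (rootX p k ?vote' (conf(i := conf i))) (rootX p k vote conf)"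
    using spe i(1) unfolding SPE_def by blast
  then have nash: "probOf ?y (chanceX p k conf (votes p ?vote'))
                     \<le> probOf ?y (chanceX p k conf (votes p vote))"
    by (simp add: rootX_def not_spref_iff i(2))
  have current: "probOf ?y (chanceX p k conf (votes p vote)) = ?Q * ?share vote"
    by (rule probOf_Maj_chanceX[OF k eq w])
  have "?share vote < 1"
    using card_eq_less_if_ne[of i _ vote, OF i(1,3)] by (simp add: nag_def)
  have "?share vote < ?share ?vote'"
    using card_eq_fun_upd[of i _ vote, OF i(1,3)] by (simp add: nag_def divide_strict_right_mono)
  show False
  proof (cases "winner p k (votes p ?vote') = ?y")
    case True
    then have "probOf ?y (chanceX p k conf (votes p ?vote')) = 1"
      using chanceX_eq_lotX_Maj[OF k eq length_votes] by (simp add: probOf_lotX)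
    moreover have "?Q * ?share vote \<le> 1 * ?share vote"
      using Q(2) by (intro mult_right_mono) simp_all
    ultimately show False
      using nash current \<open>?share vote < 1\<close> by linarith
  next
    case False
    with w have "winner p k (votes p ?vote') = ?w"
      by (cases ?y) simp_all
    with False have "probOf ?y (chanceX p k conf (votes p ?vote')) = ?Q * ?share ?vote'"
      using probOf_Maj_chanceX[OF k eq False] by simp
    moreover have "?Q * ?share vote < ?Q * ?share ?vote'"
      using mult_strict_left_mono[OF \<open>?share vote < ?share ?vote'\<close> Q(1)] .
    ultimately show False
      using nash current by simp
  qed
qed

lemma SPE_rootX_eq_Maj:
  assumes "1 \<le> k" "k \<le> p" and "SPE p k R vote conf"
  shows "rootX p k vote conf = lotX (Maj p k R)"
  unfolding rootX_def
  using chanceX_eq_lotX_Maj[OF assms(1,2) SPE_confirmation_equilibrium[OF assms(3)] length_votes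
      SPE_winner_eq_Maj[OF assms]] .

lemma SPE_sincere_conf:
  assumes k: "1 \<le> k" "k \<le> p"
  shows "SPE p k R R (sincere_conf p k R)"
proof -
  let ?y = "Maj p k R" and ?conf = "sincere_conf p k R"
  have root: "chanceX p k ?conf (votes p R) = lotX ?y"
    by (rule chanceX_eq_lotX_Maj[OF k confirmation_equilibrium_sincere_conf length_votes
          winner_votes_eq_Maj])
  have "\<not> spref (R i) (chanceX p k (?conf(i := c)) (votes p (R(i := a))))
                       (chanceX p k ?conf (votes p R))" for i a c
  proof -
    let ?v = "votes p (R(i := a))"
    have "\<not> spref (R i) (chanceX p k ?conf ?v) (lotX ?y)"
    proof (cases "R i = ?y")
      case True
      then show ?thesis
        using chanceX_bounds[of ?v p k ?conf] probOf_bounds[of _ ?y]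
        by (simp add: not_spref_iff probOf_lotX)
    next
      case False
      then have "winner p k ?v = ?y"
        by (intro winner_votes_mono[OF winner_votes_eq_Maj]) auto
      then show ?thesis
        by (simp add: chanceX_eq_lotX_Maj[OF k confirmation_equilibrium_sincere_conf] not_spref_iff)
    qed
    with sincere_conf_chance_equilibrium[OF length_votes] root show ?thesis
      by (metis not_spref_trans)
  qed
  then show ?thesis
    unfolding SPE_def rootX_def
    by (simp add: sincere_conf_chance_equilibrium sincere_conf_node_equilibrium)
qed

theorem proposition5:
  fixes p k :: nat
  assumes "1 \<le> k" and "k \<le> p"
  shows "\<forall>R :: nat \<Rightarrow> opt.
           (\<forall>vote conf. SPE p k R vote conf \<longrightarrow> rootX p k vote conf = lotX (Maj p k R)) \<and>
           (\<exists>vote conf. SPE p k R vote conf \<and> rootX p k vote conf = lotX (Maj p k R))"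
  using SPE_rootX_eq_Maj[OF assms] SPE_sincere_conf[OF assms] by blast

end
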